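(* Let $\lambda>0$ and $r,x\in\mathbb{R}$, and let $X$ be a Poisson random variable with parameter $\lambda$. For every integer $n\ge 0$, \[ \sum_{m=0}^n \binom{n}{m} x^{n-m} E[(X+r\lambda)^m] = \sum_{m=0}^n \binom{n}{m} x^{n-m} Bel_{m,r}(\lambda) = \sum_{k=0}^n \lambda^k S_{2,r}(n,k|x). \]
   Context: A Poisson random variable $X$ with parameter $\lambda>0$ satisfies $P(X=i)=e^{-\lambda}\lambda^i/i!$ for $i=0,1,2,\dots$. For $r,x\in\mathbb{R}$ and integer $k\ge 0$, the extended Stirling polynomials of the second kind are defined by $\frac{1}{k!} e^{xt}(e^t-1+rt)^k = \sum_{n=k}^\infty S_{2,r}(n,k|x)\frac{t^n}{n!}$. The extended Bell polynomials $Bel_{n,r}(\lambda)$ are defined by $e^{\lambda(e^t-1+rt)} = \sum_{n=0}^\infty Bel_{n,r}(\lambda)\frac{t^n}{n!}$. *)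

theory Defs
  imports "HOL-Probability.Probability" "HOL-Computational_Algebra.Formal_Power_Series"
begin

definition ext_gen :: "real \<Rightarrow> real fps" where
  "ext_gen r = fps_exp 1 - 1 + fps_const r * fps_X"

definition S2r :: "real \<Rightarrow> nat \<Rightarrow> nat \<Rightarrow> real \<Rightarrow> real" where
  "S2r r n k x = fact n * fps_nth (fps_const (1 / fact k) * fps_exp x * (ext_gen r) ^ k) n"

definition Belr :: "nat \<Rightarrow> real \<Rightarrow> real \<Rightarrow> real" where
  "Belr n r l = fact n * fps_nth (fps_compose (fps_exp l) (ext_gen r)) n"

end

theory Submission
  imports Defs
begin

(* Write g(t) = e^t - 1 + r t. Both sequences B_m = E[(X + r l)^m] and B_m = Bel_{m,r}(l) satisfy
   B_0 = 1 and B_{m+1} = r l B_m + l * (SUM j<=m. (m choose j) B_j): for the Bell polynomials this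
   is the coefficientwise form of G' = l G (e^t + r), where G = exp(l g); for the Poisson moments it
   comes from the identity k P(X = k) = l P(X = k - 1). For the second equality, the binomial sum is
   n! [t^n] e^{x t} G(t), and since g(0) = 0 only the terms l^k g^k / k! with k <= n of
   G = SUM k. l^k g^k / k! contribute to that coefficient. *)

no_notation vec_nth (infixl "$" 90)
notation fps_nth (infixl "$" 75)

lemma fact_mult_fps_mult_nth:
  fixes f g :: "'a::field_char_0 fps"
  shows "fact n * (f * g) $ n
           = (\<Sum>j\<le>n. of_nat (n choose j) * (fact j * f $ j) * (fact (n - j) * g $ (n - j)))"
  unfolding fps_mult_nth atLeast0AtMost sum_distrib_left
proof (rule sum.cong[OF refl])
  fix j assume "j \<in> {..n}"
  then have "fact n = (of_nat (fact j * fact (n - j) * (n choose j)) :: 'a)"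
    by (simp add: binomial_fact_lemma)
  then show "fact n * (f $ j * g $ (n - j))
      = of_nat (n choose j) * (fact j * f $ j) * (fact (n - j) * g $ (n - j))"
    by (simp add: algebra_simps)
qed

lemma fps_compose_nth_le:
  fixes f g :: "'a::field_char_0 fps"
  assumes "g $ 0 = 0" and "m \<le> n"
  shows "(f oo g) $ m = (\<Sum>k\<le>n. f $ k * (g ^ k) $ m)"
  unfolding fps_compose_nth atLeast0AtMost
  using startsby_zero_power_prefix[OF assms(1)] assms(2)
  by (intro sum.mono_neutral_left) auto

lemma ext_gen_nth_0 [simp]: "ext_gen r $ 0 = 0"
  by (simp add: ext_gen_def)

lemma Belr_0 [simp]: "Belr 0 r l = 1"
  by (simp add: Belr_def)

lemma Belr_Suc:
  "Belr (Suc m) r l = r * l * Belr m r l + l * (\<Sum>j\<le>m. real (m choose j) * Belr j r l)"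
proof -
  define G where "G = fps_exp l oo ext_gen r"
  have Belr_G: "Belr k r l = fact k * G $ k" for k
    by (simp add: Belr_def G_def)
  have "fps_deriv G = fps_const l * G * (fps_exp 1 + fps_const r)"
    unfolding G_def by (simp add: fps_compose_deriv ext_gen_def fps_const_mult_apply_left)
  also have "\<dots> = fps_const l * (G * fps_exp 1) + fps_const (r * l) * G"
    by (simp add: algebra_simps flip: fps_const_mult)
  finally have "fps_deriv G $ m = (fps_const l * (G * fps_exp 1) + fps_const (r * l) * G) $ m"
    by (rule arg_cong)
  then have deriv_nth: "real (Suc m) * G $ Suc m = l * (G * fps_exp 1) $ m + r * l * G $ m"
    by (simp only: fps_add_nth fps_mult_left_const_nth fps_deriv_nth) (simp add: algebra_simps)
  have "Belr (Suc m) r l = fact m * (real (Suc m) * G $ Suc m)"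
    unfolding Belr_G by (simp add: fact_Suc del: of_nat_Suc)
  also have "\<dots> = l * (fact m * (G * fps_exp 1) $ m) + r * l * Belr m r l"
    unfolding deriv_nth Belr_G by (simp add: algebra_simps)
  also have "fact m * (G * fps_exp 1) $ m = (\<Sum>j\<le>m. real (m choose j) * Belr j r l)"
    unfolding fact_mult_fps_mult_nth Belr_G by simp
  finally show ?thesis
    by simp
qed

lemma binomial_sum_Belr_eq_S2r:
  "(\<Sum>m\<le>n. real (n choose m) * x ^ (n - m) * Belr m r l) = (\<Sum>k\<le>n. l ^ k * S2r r n k x)"
proof -
  define g where "g = ext_gen r"
  have "(\<Sum>m\<le>n. real (n choose m) * x ^ (n - m) * Belr m r l)
      = fact n * ((fps_exp l oo g) * fps_exp x) $ n"
    unfolding fact_mult_fps_mult_nth Belr_def g_def by (simp add: algebra_simps)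
  also have "\<dots> = fact n * (\<Sum>m\<le>n. \<Sum>k\<le>n. l ^ k / fact k * (g ^ k) $ m * fps_exp x $ (n - m))"
    unfolding fps_mult_nth atLeast0AtMost
  proof (intro arg_cong[where f = "(*) (fact n)"] sum.cong refl)
    fix m assume "m \<in> {..n}"
    then have "(fps_exp l oo g) $ m = (\<Sum>k\<le>n. l ^ k / fact k * (g ^ k) $ m)"
      by (simp add: fps_compose_nth_le g_def)
    then show "(fps_exp l oo g) $ m * fps_exp x $ (n - m)
        = (\<Sum>k\<le>n. l ^ k / fact k * (g ^ k) $ m * fps_exp x $ (n - m))"
      by (simp add: sum_distrib_right del: fps_exp_nth)
  qed
  also have "\<dots> = fact n * (\<Sum>k\<le>n. l ^ k / fact k * (\<Sum>m\<le>n. (g ^ k) $ m * fps_exp x $ (n - m)))"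
    by (subst sum.swap) (simp only: sum_distrib_left mult.assoc)
  also have "\<dots> = (\<Sum>k\<le>n. l ^ k * (fact n * (fps_const (1 / fact k) * fps_exp x * g ^ k) $ n))"
  proof (subst sum_distrib_left, intro sum.cong refl)
    fix k
    have "(fps_const (1 / fact k) * fps_exp x * g ^ k) $ n
        = (\<Sum>m\<le>n. (g ^ k) $ m * fps_exp x $ (n - m)) / fact k"
      unfolding mult.assoc mult.commute[of "fps_exp x"] fps_mult_left_const_nth
      by (simp add: fps_mult_nth atLeast0AtMost del: fps_exp_nth)
    then show "fact n * (l ^ k / fact k * (\<Sum>m\<le>n. (g ^ k) $ m * fps_exp x $ (n - m)))
        = l ^ k * (fact n * (fps_const (1 / fact k) * fps_exp x * g ^ k) $ n)"
      by (simp del: fps_exp_nth)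
  qed
  finally show ?thesis
    unfolding S2r_def g_def .
qed

lemma integral_nat_valued_eq_suminf:
  fixes X :: "'a \<Rightarrow> nat" and f :: "nat \<Rightarrow> real"
  assumes "prob_space M"
    and X: "X \<in> measurable M (count_space UNIV)"
    and summable: "summable (\<lambda>i. \<bar>f i\<bar> * measure M {\<omega> \<in> space M. X \<omega> = i})"
  shows "(\<integral>\<omega>. f (X \<omega>) \<partial>M) = (\<Sum>i. f i * measure M {\<omega> \<in> space M. X \<omega> = i})"
proof -
  interpret prob_space M by fact
  define A where "A i = {\<omega> \<in> space M. X \<omega> = i}" for i
  have A: "A i \<in> sets M" for i
    unfolding A_def using X by measurable
  define g where "g i \<omega> = f i * indicator (A i) \<omega>" for i \<omega>
  have g_single: "(\<lambda>i. g i \<omega>) = (\<lambda>i. if i = X \<omega> then f (X \<omega>) else 0)" if "\<omega> \<in> space M" for \<omega>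
    using that by (auto simp: g_def A_def)
  have "(\<integral>\<omega>. (\<Sum>i. g i \<omega>) \<partial>M) = (\<Sum>i. \<integral>\<omega>. g i \<omega> \<partial>M)"
  proof (rule integral_suminf)
    show "integrable M (g i)" for i
      unfolding g_def using A by (auto simp: emeasure_eq_measure)
    show "AE \<omega> in M. summable (\<lambda>i. norm (g i \<omega>))"
    proof (intro AE_I2)
      fix \<omega> assume "\<omega> \<in> space M"
      then have "(\<lambda>i. norm (g i \<omega>)) = (\<lambda>i. if i = X \<omega> then norm (f (X \<omega>)) else 0)"
        by (auto simp: g_def A_def indicator_def)
      then show "summable (\<lambda>i. norm (g i \<omega>))"
        by simp
    qed
    show "summable (\<lambda>i. \<integral>\<omega>. norm (g i \<omega>) \<partial>M)"
      using summable by (simp add: g_def abs_mult A sets.Int_space_eq2 flip: A_def)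
  qed
  also have "(\<integral>\<omega>. (\<Sum>i. g i \<omega>) \<partial>M) = (\<integral>\<omega>. f (X \<omega>) \<partial>M)"
    using sums_single[of "X _" "\<lambda>_. f (X _)"]
    by (intro Bochner_Integration.integral_cong) (simp_all add: g_single sums_iff)
  finally show ?thesis
    by (simp add: g_def A sets.Int_space_eq2 flip: A_def)
qed

definition poisson_weight :: "real \<Rightarrow> nat \<Rightarrow> real" where
  "poisson_weight l i = exp (- l) * l ^ i / fact i"

definition poisson_shifted_moment :: "real \<Rightarrow> real \<Rightarrow> nat \<Rightarrow> real" where
  "poisson_shifted_moment l c m = (\<Sum>i. (real i + c) ^ m * poisson_weight l i)"

lemma poisson_weight_nonneg: "l \<ge> 0 \<Longrightarrow> poisson_weight l i \<ge> 0"
  by (simp add: poisson_weight_def)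

lemma Suc_mult_poisson_weight_Suc: "real (Suc i) * poisson_weight l (Suc i) = l * poisson_weight l i"
  by (simp add: poisson_weight_def fact_Suc del: of_nat_Suc)

lemma sums_poisson_weight: "(\<lambda>i. poisson_weight l i) sums 1"
  using sums_mult[OF exp_converges[of l], of "exp (- l)"]
  by (simp add: poisson_weight_def exp_minus field_simps)

lemma power_le_fact_mult_exp:
  fixes y :: real
  assumes "y \<ge> 0"
  shows "y ^ m \<le> fact m * exp y"
proof -
  have "y ^ m / fact m \<le> exp y"
    using sum_le_suminf[OF summable_exp, of "{m}" y] assms
    by (simp add: exp_def divide_inverse mult.commute)
  then show ?thesis
    by (simp add: divide_le_eq mult.commute)
qed

lemma summable_abs_poisson_moment:
  assumes "l \<ge> 0"
  shows "summable (\<lambda>i. \<bar>(real i + c) ^ m\<bar> * poisson_weight l i)"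
proof (rule summable_comparison_test')
  show "summable (\<lambda>i. fact m * exp \<bar>c\<bar> * exp (- l) * (inverse (fact i) * (exp 1 * l) ^ i))"
    by (intro summable_mult summable_exp)
  fix i :: nat
  have "\<bar>(real i + c) ^ m\<bar> \<le> (real i + \<bar>c\<bar>) ^ m"
    unfolding power_abs by (intro power_mono) auto
  also have "\<dots> \<le> fact m * exp (real i + \<bar>c\<bar>)"
    by (intro power_le_fact_mult_exp) auto
  also have "\<dots> = fact m * exp \<bar>c\<bar> * exp 1 ^ i"
    using exp_of_nat_mult[of i 1] by (simp add: exp_add)
  finally have bound: "\<bar>(real i + c) ^ m\<bar> \<le> fact m * exp \<bar>c\<bar> * exp 1 ^ i" .
  have "norm (\<bar>(real i + c) ^ m\<bar> * poisson_weight l i) = \<bar>(real i + c) ^ m\<bar> * poisson_weight l i"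
    using poisson_weight_nonneg[OF assms] by (simp add: abs_mult)
  also have "\<dots> \<le> fact m * exp \<bar>c\<bar> * exp 1 ^ i * poisson_weight l i"
    using bound poisson_weight_nonneg[OF assms] by (rule mult_right_mono)
  also have "\<dots> = fact m * exp \<bar>c\<bar> * exp (- l) * (inverse (fact i) * (exp 1 * l) ^ i)"
    by (simp add: poisson_weight_def power_mult_distrib field_simps)
  finally show "norm (\<bar>(real i + c) ^ m\<bar> * poisson_weight l i)
      \<le> fact m * exp \<bar>c\<bar> * exp (- l) * (inverse (fact i) * (exp 1 * l) ^ i)" .
qed

lemma summable_poisson_moment:
  assumes "l \<ge> 0"
  shows "summable (\<lambda>i. (real i + c) ^ m * poisson_weight l i)"
proof (rule summable_rabs_cancel)
  show "summable (\<lambda>i. \<bar>(real i + c) ^ m * poisson_weight l i\<bar>)"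
    using summable_abs_poisson_moment[OF assms, of c m] poisson_weight_nonneg[OF assms]
    by (simp add: abs_mult)
qed

lemma poisson_shifted_moment_0 [simp]: "poisson_shifted_moment l c 0 = 1"
  using sums_poisson_weight[of l] by (simp add: poisson_shifted_moment_def sums_iff)

(* Write (i + c)^(m+1) = c (i + c)^m + i (i + c)^m; the identity i w(i) = l w(i - 1) for the
   Poisson weights turns the second sum into l * (SUM i. (i + 1 + c)^m w(i)), which is then
   expanded by the binomial theorem. *)

lemma poisson_shifted_moment_Suc:
  assumes "l \<ge> 0"
  shows "poisson_shifted_moment l c (Suc m)
           = c * poisson_shifted_moment l c m
             + l * (\<Sum>j\<le>m. real (m choose j) * poisson_shifted_moment l c j)"
proof -
  let ?w = "poisson_weight l"
  define q where "q i = real i * (real i + c) ^ m * ?w i" for i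
  have q_eq: "q i = (real i + c) ^ Suc m * ?w i - c * ((real i + c) ^ m * ?w i)" for i
    unfolding q_def by (simp add: algebra_simps)
  have summable_q: "summable q"
    unfolding q_eq by (intro summable_diff summable_mult summable_poisson_moment assms)
  have "poisson_shifted_moment l c (Suc m) = (\<Sum>i. q i + c * ((real i + c) ^ m * ?w i))"
    unfolding poisson_shifted_moment_def by (simp add: q_eq)
  also have "\<dots> = suminf q + c * poisson_shifted_moment l c m"
    unfolding poisson_shifted_moment_def using summable_q summable_poisson_moment[OF assms]
    by (simp add: suminf_add[symmetric] suminf_mult summable_mult)
  also have "suminf q = (\<Sum>i. q (Suc i))"
    using suminf_split_head[OF summable_q] by (simp add: q_def)
  also have "\<dots> = (\<Sum>i. \<Sum>j\<le>m. l * (real (m choose j) * ((real i + c) ^ j * ?w i)))"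
  proof (rule suminf_cong)
    fix i
    have "q (Suc i) = (real i + c + 1) ^ m * (real (Suc i) * ?w (Suc i))"
      unfolding q_def by (simp add: algebra_simps)
    also have "\<dots> = l * ((real i + c + 1) ^ m * ?w i)"
      unfolding Suc_mult_poisson_weight_Suc by (simp add: algebra_simps)
    also have "\<dots> = (\<Sum>j\<le>m. l * (real (m choose j) * ((real i + c) ^ j * ?w i)))"
      unfolding binomial_ring[of "real i + c" 1 m]
      by (simp add: sum_distrib_left sum_distrib_right mult_ac)
    finally show "q (Suc i) = \<dots>" .
  qed
  also have "\<dots> = l * (\<Sum>j\<le>m. real (m choose j) * poisson_shifted_moment l c j)"
    unfolding poisson_shifted_moment_def
    by (subst suminf_sum)
      (auto intro: summable_mult summable_poisson_moment assms
        simp: suminf_mult summable_poisson_moment assms sum_distrib_left)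
  finally show ?thesis
    by simp
qed

lemma poisson_shifted_moment_eq_Belr:
  assumes "l \<ge> 0"
  shows "poisson_shifted_moment l (r * l) m = Belr m r l"
proof (induction m rule: less_induct)
  case (less m)
  show ?case
  proof (cases m)
    case (Suc k)
    then show ?thesis
      using less by (simp add: poisson_shifted_moment_Suc[OF assms] Belr_Suc)
  qed simp
qed

theorem mainTheorem9:
  fixes M :: "'a measure" and X :: "'a \<Rightarrow> nat" and l r x :: real and n :: nat
  assumes "prob_space M"
    and "l > 0"
    and "X \<in> measurable M (count_space UNIV)"
    and "\<And>i. measure M {\<omega> \<in> space M. X \<omega> = i} = exp (- l) * l ^ i / fact i"
  shows "(\<Sum>m\<le>n. real (n choose m) * x ^ (n - m) *
            (\<integral>\<omega>. (real (X \<omega>) + r * l) ^ m \<partial>M))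
           = (\<Sum>m\<le>n. real (n choose m) * x ^ (n - m) * Belr m r l)
       \<and> (\<Sum>m\<le>n. real (n choose m) * x ^ (n - m) * Belr m r l)
           = (\<Sum>k\<le>n. l ^ k * S2r r n k x)"
proof
  have distribution: "measure M {\<omega> \<in> space M. X \<omega> = i} = poisson_weight l i" for i
    using assms(4) by (simp add: poisson_weight_def)
  have "(\<integral>\<omega>. (real (X \<omega>) + r * l) ^ m \<partial>M) = poisson_shifted_moment l (r * l) m" for m
    unfolding poisson_shifted_moment_def distribution[symmetric]
    using summable_abs_poisson_moment[of l "r * l" m] assms(1-3)
    by (intro integral_nat_valued_eq_suminf) (simp_all add: distribution)
  then show "(\<Sum>m\<le>n. real (n choose m) * x ^ (n - m) *
            (\<integral>\<omega>. (real (X \<omega>) + r * l) ^ m \<partial>M))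
           = (\<Sum>m\<le>n. real (n choose m) * x ^ (n - m) * Belr m r l)"
    using assms(2) by (simp add: poisson_shifted_moment_eq_Belr)
qed (rule binomial_sum_Belr_eq_S2r)

end
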